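(* Let $\mathcal{C}$ be a 3XOR instance with $\mathrm{val}(\mathcal{C})\ge 1-\epsilon$. Then $\mathrm{GI}(G_{\mathcal{C}},G_{\mathcal{C}^0})\ge 1-2\epsilon/3$.
   Context: A 3XOR instance $\mathcal{C}=(C_1,\dots,C_m)$ over a variable set $\mathcal{X}$ with $|\mathcal{X}|=n$ consists of equations $C_i: x_{j_1}+x_{j_2}+x_{j_3}=b$ over $\mathbb{Z}_2$ on three distinct variables. $\mathrm{val}(\mathcal{C})$ is the maximum over assignments $\tau:\mathcal{X}\to\mathbb{Z}_2$ of the fraction of satisfied equations. The homogeneous version $C^0$ of $C$ is the same equation with right-hand side $0$, and $\mathcal{C}^0=\{C^0:C\in\mathcal{C}\}$. Graph $G_{\mathcal{C}}$: for each variable $x$ there are two "variable vertices" $x\mapsto 0$, $x\mapsto 1$ joined by an edge. For each equation $C$ on $x_1,x_2,x_3$ there are 4 "constraint vertices" $\alpha_C$, one for each assignment $\alpha=(x_1\mapsto a_1,x_2\mapsto a_2,x_3\mapsto a_3)$ satisfying $C$ (distinct constraints get distinct constraint vertices); these 4 vertices form a clique, and each $\alpha_C$ is adjacent to the three variable vertices $x_i\mapsto a_i$ consistent with it. Variable vertices are shared among all constraints. Thus $G_{\mathcal{C}}$ has $4m+2n$ vertices and $18m+n$ edges. For graphs $G,H$ on equally many vertices, $\mathrm{GI}(G,H)=\max_{\pi}\frac{|\{e\in E(G):\pi(e)\in E(H)\}|}{\max\{|E(G)|,|E(H)|\}}$ over bijections $\pi:V(G)\to V(H)$. *)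

theory Defs
  imports Complex_Main
begin

text \<open>Z_2 is modelled by bool: False = 0, True = 1, addition = exclusive or.\<close>

definition z2add :: "bool \<Rightarrow> bool \<Rightarrow> bool" where
  "z2add a b = (a \<noteq> b)"

text \<open>A 3XOR equation x_{j1} + x_{j2} + x_{j3} = b: a triple of variables and a right-hand side.\<close>
type_synonym 'v eqn = "('v \<times> 'v \<times> 'v) \<times> bool"

definition eq_vars :: "'v eqn \<Rightarrow> 'v set" where
  "eq_vars C = (case C of ((x1,x2,x3),b) \<Rightarrow> {x1,x2,x3})"

definition is_3xor :: "'v set \<Rightarrow> 'v eqn list \<Rightarrow> bool" where
  "is_3xor X Cs \<longleftrightarrow> finite X \<and>
     (\<forall>C\<in>set Cs. case C of ((x1,x2,x3),b) \<Rightarrow>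
        x1 \<in> X \<and> x2 \<in> X \<and> x3 \<in> X \<and> x1 \<noteq> x2 \<and> x1 \<noteq> x3 \<and> x2 \<noteq> x3)"

definition sat_local :: "'v eqn \<Rightarrow> bool \<times> bool \<times> bool \<Rightarrow> bool" where
  "sat_local C \<alpha> = (case C of ((x1,x2,x3),b) \<Rightarrow> case \<alpha> of (a1,a2,a3) \<Rightarrow>
      z2add (z2add a1 a2) a3 = b)"

definition sat :: "('v \<Rightarrow> bool) \<Rightarrow> 'v eqn \<Rightarrow> bool" where
  "sat \<tau> C = (case C of ((x1,x2,x3),b) \<Rightarrow> sat_local C (\<tau> x1, \<tau> x2, \<tau> x3))"

definition frac_sat :: "'v eqn list \<Rightarrow> ('v \<Rightarrow> bool) \<Rightarrow> real" where
  "frac_sat Cs \<tau> = real (card {i. i < length Cs \<and> sat \<tau> (Cs ! i)}) / real (length Cs)"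

text \<open>val: maximum over assignments of the fraction of satisfied equations (only the values on the
  variables occurring matter; the set of values is finite).\<close>
definition val :: "'v eqn list \<Rightarrow> real" where
  "val Cs = Max (range (frac_sat Cs))"

definition homog :: "'v eqn \<Rightarrow> 'v eqn" where
  "homog C = (fst C, False)"

definition homog_inst :: "'v eqn list \<Rightarrow> 'v eqn list" where
  "homog_inst Cs = map homog Cs"

text \<open>Vertices of G_C: variable vertices (x |-> a) and constraint vertices alpha_C, where the
  constraint is identified by its index in the list (distinct constraints, distinct vertices).\<close>
datatype 'v vtx = VarV 'v bool | ConV nat "bool \<times> bool \<times> bool"

type_synonym 'a graph = "'a set \<times> 'a set set"

definition verts :: "'a graph \<Rightarrow> 'a set" where "verts G = fst G"
definition edges :: "'a graph \<Rightarrow> 'a set set" where "edges G = snd G"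

definition G_of :: "'v set \<Rightarrow> 'v eqn list \<Rightarrow> 'v vtx graph" where
  "G_of X Cs =
    ({VarV x a | x a. x \<in> X} \<union>
     {ConV i \<alpha> | i \<alpha>. i < length Cs \<and> sat_local (Cs ! i) \<alpha>},
     {{VarV x False, VarV x True} | x. x \<in> X} \<union>
     {{ConV i \<alpha>, ConV i \<beta>} | i \<alpha> \<beta>. i < length Cs \<and> sat_local (Cs ! i) \<alpha> \<and>
        sat_local (Cs ! i) \<beta> \<and> \<alpha> \<noteq> \<beta>} \<union>
     {{ConV i (a1,a2,a3), VarV x a} | i a1 a2 a3 x a. i < length Cs \<and>
        sat_local (Cs ! i) (a1,a2,a3) \<and>
        (case fst (Cs ! i) of (x1,x2,x3) \<Rightarrow>
           (x = x1 \<and> a = a1) \<or> (x = x2 \<and> a = a2) \<or> (x = x3 \<and> a = a3))})"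

definition GI :: "'a graph \<Rightarrow> 'b graph \<Rightarrow> real" where
  "GI G H = Max ((\<lambda>\<pi>. real (card {e \<in> edges G. \<pi> ` e \<in> edges H}) /
                       real (max (card (edges G)) (card (edges H))))
                 ` {\<pi>. bij_betw \<pi> (verts G) (verts H)})"

end

theory Submission
  imports Defs
begin

text \<open>Fix an optimal assignment \<open>\<tau>\<close> and relabel \<open>G_C\<close> onto \<open>G_{C^0}\<close>: send each variable
  vertex \<open>x \<mapsto> a\<close> to \<open>x \<mapsto> a + \<tau>(x)\<close>, and each constraint vertex \<open>\<alpha>_C\<close> to \<open>(\<alpha> + \<delta>_C)_C\<close>
  for a solution \<open>\<delta>_C\<close> of \<open>C\<close>. By linearity this maps the solutions of \<open>C\<close> onto those of
  \<open>C^0\<close>, so all variable edges and all clique edges are preserved. If \<open>\<tau>\<close> satisfies \<open>C\<close>,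
  take \<open>\<delta>_C\<close> to be \<open>\<tau>\<close> restricted to the variables of \<open>C\<close>; then the 12 incidence edges of
  \<open>C\<close> are preserved too. Hence only the incidence edges of the at most \<open>\<epsilon>m\<close> violated
  constraints are lost: at most \<open>12\<epsilon>m\<close> of the at least \<open>18m\<close> edges of either graph.\<close>

definition var_edges :: "'v set \<Rightarrow> 'v vtx set set" where
  "var_edges X = {{VarV x False, VarV x True} | x. x \<in> X}"

definition clique_edges :: "nat \<Rightarrow> 'v eqn \<Rightarrow> 'v vtx set set" where
  "clique_edges i C =
     {{ConV i \<alpha>, ConV i \<beta>} | \<alpha> \<beta>. sat_local C \<alpha> \<and> sat_local C \<beta> \<and> \<alpha> \<noteq> \<beta>}"

definition consistent :: "'v eqn \<Rightarrow> bool \<times> bool \<times> bool \<Rightarrow> 'v \<Rightarrow> bool \<Rightarrow> bool" where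
  "consistent C \<alpha> x a \<longleftrightarrow> (case fst C of (x1,x2,x3) \<Rightarrow> case \<alpha> of (a1,a2,a3) \<Rightarrow>
     (x = x1 \<and> a = a1) \<or> (x = x2 \<and> a = a2) \<or> (x = x3 \<and> a = a3))"

definition incidence_edges :: "nat \<Rightarrow> 'v eqn \<Rightarrow> 'v vtx set set" where
  "incidence_edges i C =
     {{ConV i \<alpha>, VarV x a} | \<alpha> x a. sat_local C \<alpha> \<and> consistent C \<alpha> x a}"

lemma clique_edgesI:
  "sat_local C \<alpha> \<Longrightarrow> sat_local C \<beta> \<Longrightarrow> \<alpha> \<noteq> \<beta> \<Longrightarrow> {ConV i \<alpha>, ConV i \<beta>} \<in> clique_edges i C"
  unfolding clique_edges_def by blast

lemma clique_edgesE:
  assumes "e \<in> clique_edges i C"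
  obtains \<alpha> \<beta> where "e = {ConV i \<alpha>, ConV i \<beta>}" "sat_local C \<alpha>" "sat_local C \<beta>" "\<alpha> \<noteq> \<beta>"
  using assms unfolding clique_edges_def by blast

lemma incidence_edgesI:
  "sat_local C \<alpha> \<Longrightarrow> consistent C \<alpha> x a \<Longrightarrow> {ConV i \<alpha>, VarV x a} \<in> incidence_edges i C"
  unfolding incidence_edges_def by blast

lemma incidence_edgesE:
  assumes "e \<in> incidence_edges i C"
  obtains \<alpha> x a where "e = {ConV i \<alpha>, VarV x a}" "sat_local C \<alpha>" "consistent C \<alpha> x a"
  using assms unfolding incidence_edges_def by blast

lemma edges_G_of:
  "edges (G_of X Cs) = var_edges X \<union> (\<Union>i<length Cs. clique_edges i (Cs ! i))
     \<union> (\<Union>i<length Cs. incidence_edges i (Cs ! i))"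
proof -
  have cliques: "{{ConV i \<alpha>, ConV i \<beta>} | i \<alpha> \<beta>. i < length Cs \<and> sat_local (Cs ! i) \<alpha> \<and>
        sat_local (Cs ! i) \<beta> \<and> \<alpha> \<noteq> \<beta>} = (\<Union>i<length Cs. clique_edges i (Cs ! i))"
    unfolding clique_edges_def by blast
  have incidences: "{{ConV i (a1,a2,a3), VarV x a} | i a1 a2 a3 x a. i < length Cs \<and>
        sat_local (Cs ! i) (a1,a2,a3) \<and>
        (case fst (Cs ! i) of (x1,x2,x3) \<Rightarrow>
           (x = x1 \<and> a = a1) \<or> (x = x2 \<and> a = a2) \<or> (x = x3 \<and> a = a3))}
      = (\<Union>i<length Cs. incidence_edges i (Cs ! i))"
    (is "?L = ?R")
  proof (intro equalityI subsetI)
    fix e assume "e \<in> ?L"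
    then obtain i a1 a2 a3 x a where e: "i < length Cs" "e = {ConV i (a1,a2,a3), VarV x a}"
      "sat_local (Cs ! i) (a1,a2,a3)" "consistent (Cs ! i) (a1,a2,a3) x a"
      by (elim CollectE exE conjE) (rule that; simp add: consistent_def)
    show "e \<in> ?R"
      unfolding e(2) using e(1) by (intro UN_I[of i] incidence_edgesI e(3,4)) simp
  next
    fix e assume "e \<in> ?R"
    then obtain i a1 a2 a3 x a where e: "i < length Cs" "e = {ConV i (a1,a2,a3), VarV x a}"
      "sat_local (Cs ! i) (a1,a2,a3)" "consistent (Cs ! i) (a1,a2,a3) x a"
      unfolding incidence_edges_def by (elim UN_E CollectE exE conjE) (metis prod_cases3 lessThan_iff)
    show "e \<in> ?L"
      unfolding mem_Collect_eq
      by (intro exI[of _ i] exI[of _ a1] exI[of _ a2] exI[of _ a3] exI[of _ x] exI[of _ a] conjI e)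
        (use e(4) in \<open>simp add: consistent_def\<close>)
  qed
  show ?thesis
    unfolding edges_def G_of_def var_edges_def cliques incidences by simp
qed

lemma verts_G_of:
  "VarV x a \<in> verts (G_of X Cs) \<longleftrightarrow> x \<in> X"
  "ConV i \<alpha> \<in> verts (G_of X Cs) \<longleftrightarrow> i < length Cs \<and> sat_local (Cs ! i) \<alpha>"
  by (simp_all add: verts_def G_of_def del: split_paired_Ex)

lemma homog_inst_nth [simp]: "i < length Cs \<Longrightarrow> homog_inst Cs ! i = homog (Cs ! i)"
  by (simp add: homog_inst_def)

lemma length_homog_inst [simp]: "length (homog_inst Cs) = length Cs"
  by (simp add: homog_inst_def)

lemma is_3xor_distinct:
  "is_3xor X Cs \<Longrightarrow> C \<in> set Cs \<Longrightarrow> fst C = (x1,x2,x3) \<Longrightarrow> distinct [x1,x2,x3]"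
  unfolding is_3xor_def by (cases C) fastforce

lemma sat_local_iff: "sat_local C (a1,a2,a3) \<longleftrightarrow> a3 = z2add (z2add a1 a2) (snd C)"
  by (cases C) (auto simp: sat_local_def z2add_def)

lemma card_sat_local: "card {\<alpha>. sat_local C \<alpha>} = 4"
proof -
  have "{\<alpha>. sat_local C \<alpha>} = (\<lambda>(a1,a2). (a1, a2, z2add (z2add a1 a2) (snd C))) ` UNIV"
    by (auto simp: sat_local_iff image_iff)
  moreover have "inj (\<lambda>(a1,a2). (a1, a2, z2add (z2add a1 a2) (snd C)))"
    by (auto intro: injI)
  ultimately show ?thesis
    by (simp add: card_image card_UNIV_bool card_cartesian_product flip: UNIV_Times_UNIV)
qed

lemma clique_edges_eq_2_subsets:
  "clique_edges i C = {e. e \<subseteq> ConV i ` {\<alpha>. sat_local C \<alpha>} \<and> card e = 2}"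
  unfolding clique_edges_def card_2_iff by blast

lemma card_clique_edges:
  fixes C :: "'v eqn"
  shows "card (clique_edges i C) = 6"
proof -
  have "card (clique_edges i C) = card (ConV i ` {\<alpha>. sat_local C \<alpha>} :: 'v vtx set) choose 2"
    unfolding clique_edges_eq_2_subsets by (rule n_subsets) simp
  also have "card (ConV i ` {\<alpha>. sat_local C \<alpha>} :: 'v vtx set) = 4"
    by (simp add: card_image inj_on_def card_sat_local)
  finally show ?thesis
    by (simp add: numeral_eq_Suc)
qed

lemma finite_clique_edges: "finite (clique_edges i C)"
  using card_clique_edges by (metis card.infinite zero_neq_numeral)

lemma consistent_values:
  "fst C = (x1,x2,x3) \<Longrightarrow> {(x,a). consistent C (a1,a2,a3) x a} = {(x1,a1), (x2,a2), (x3,a3)}"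
  by (auto simp: consistent_def)

lemma card_consistent_values_le: "card {(x,a). consistent C \<alpha> x a} \<le> 3"
proof -
  obtain x1 x2 x3 a1 a2 a3 where "fst C = (x1,x2,x3)" "\<alpha> = (a1,a2,a3)"
    by (metis prod_cases3)
  then show ?thesis
    by (simp add: consistent_values card_insert_if)
qed

lemma card_consistent_values:
  "fst C = (x1,x2,x3) \<Longrightarrow> distinct [x1,x2,x3] \<Longrightarrow> card {(x,a). consistent C \<alpha> x a} = 3"
  by (cases \<alpha>) (simp add: consistent_values)

lemma finite_consistent_values: "finite {(x,a). consistent C \<alpha> x a}"
proof -
  obtain x1 x2 x3 a1 a2 a3 where "fst C = (x1,x2,x3)" "\<alpha> = (a1,a2,a3)"
    by (metis prod_cases3)
  then show ?thesis
    by (simp add: consistent_values)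
qed

lemma incidence_edges_eq_image:
  "incidence_edges i C = (\<lambda>(\<alpha>,x,a). {ConV i \<alpha>, VarV x a}) `
     (SIGMA \<alpha>:{\<alpha>. sat_local C \<alpha>}. {(x,a). consistent C \<alpha> x a})"
proof (intro equalityI subsetI)
  fix e assume "e \<in> incidence_edges i C"
  then obtain \<alpha> x a where "e = {ConV i \<alpha>, VarV x a}" "sat_local C \<alpha>" "consistent C \<alpha> x a"
    by (rule incidence_edgesE)
  then show "e \<in> (\<lambda>(\<alpha>,x,a). {ConV i \<alpha>, VarV x a}) `
      (SIGMA \<alpha>:{\<alpha>. sat_local C \<alpha>}. {(x,a). consistent C \<alpha> x a})"
    by (intro image_eqI[of _ _ "(\<alpha>,x,a)"]) simp_all
next
  fix e assume "e \<in> (\<lambda>(\<alpha>,x,a). {ConV i \<alpha>, VarV x a}) `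
      (SIGMA \<alpha>:{\<alpha>. sat_local C \<alpha>}. {(x,a). consistent C \<alpha> x a})"
  then show "e \<in> incidence_edges i C"
    by (auto intro: incidence_edgesI)
qed

lemma finite_incidence_edges: "finite (incidence_edges i C)"
  unfolding incidence_edges_eq_image by (simp add: finite_consistent_values)

lemma ConV_VarV_eq_iff:
  "{ConV i \<alpha>, VarV x a} = {ConV j \<beta>, VarV y b} \<longleftrightarrow> i = j \<and> \<alpha> = \<beta> \<and> x = y \<and> a = b"
  by (auto simp: doubleton_eq_iff)

lemma card_incidence_edges_sum:
  "card (incidence_edges i C) = (\<Sum>\<alpha> | sat_local C \<alpha>. card {(x,a). consistent C \<alpha> x a})"
proof -
  have inj_edge: "inj (\<lambda>(\<alpha>,x,a). {ConV i \<alpha>, VarV x a})"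
    unfolding inj_def by (clarsimp simp: ConV_VarV_eq_iff)
  have "card (incidence_edges i C) =
      card (SIGMA \<alpha>:{\<alpha>. sat_local C \<alpha>}. {(x,a). consistent C \<alpha> x a})"
    unfolding incidence_edges_eq_image by (rule card_image, rule inj_on_subset[OF inj_edge subset_UNIV])
  also have "\<dots> = (\<Sum>\<alpha> | sat_local C \<alpha>. card {(x,a). consistent C \<alpha> x a})"
    by (rule card_SigmaI) (simp_all add: finite_consistent_values)
  finally show ?thesis .
qed

lemma card_incidence_edges_le: "card (incidence_edges i C) \<le> 12"
proof -
  have "card (incidence_edges i C) \<le> (\<Sum>\<alpha> | sat_local C \<alpha>. 3)"
    unfolding card_incidence_edges_sum by (rule sum_mono) (rule card_consistent_values_le)
  then show ?thesis by (simp add: card_sat_local)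
qed

lemma card_incidence_edges:
  assumes "fst C = (x1,x2,x3)" "distinct [x1,x2,x3]"
  shows "card (incidence_edges i C) = 12"
proof -
  have "card (incidence_edges i C) = (\<Sum>\<alpha> | sat_local C \<alpha>. 3)"
    unfolding card_incidence_edges_sum by (rule sum.cong) (simp_all add: card_consistent_values[OF assms])
  then show ?thesis by (simp add: card_sat_local)
qed

lemma ConV_mem_clique_edges: "e \<in> clique_edges i C \<Longrightarrow> ConV k \<alpha> \<in> e \<Longrightarrow> k = i"
  by (erule clique_edgesE) auto

lemma VarV_not_mem_clique_edges: "e \<in> clique_edges i C \<Longrightarrow> VarV x a \<notin> e"
  by (erule clique_edgesE) auto

lemma ConV_mem_incidence_edges: "e \<in> incidence_edges i C \<Longrightarrow> ConV k \<alpha> \<in> e \<Longrightarrow> k = i"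
  by (erule incidence_edgesE) auto

lemma clique_edges_disjoint: "i \<noteq> j \<Longrightarrow> clique_edges i C \<inter> clique_edges j D = {}"
  by (blast elim: clique_edgesE dest: ConV_mem_clique_edges)

lemma incidence_edges_disjoint: "i \<noteq> j \<Longrightarrow> incidence_edges i C \<inter> incidence_edges j D = {}"
  by (blast elim: incidence_edgesE dest: ConV_mem_incidence_edges)

lemma clique_incidence_edges_disjoint: "clique_edges i C \<inter> incidence_edges j D = {}"
  by (blast elim: incidence_edgesE dest: VarV_not_mem_clique_edges)

lemma finite_var_edges:
  assumes "finite X"
  shows "finite (var_edges X)"
proof -
  have "var_edges X = (\<lambda>x. {VarV x False, VarV x True}) ` X"
    unfolding var_edges_def by blast
  with assms show ?thesis by simp
qed

lemma finite_edges_G_of: "finite X \<Longrightarrow> finite (edges (G_of X Cs))"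
  by (simp add: edges_G_of finite_var_edges finite_clique_edges finite_incidence_edges)

definition xor3 :: "bool \<times> bool \<times> bool \<Rightarrow> bool \<times> bool \<times> bool \<Rightarrow> bool \<times> bool \<times> bool" where
  "xor3 \<alpha> \<delta> = (case \<alpha> of (a1,a2,a3) \<Rightarrow> case \<delta> of (d1,d2,d3) \<Rightarrow>
     (z2add a1 d1, z2add a2 d2, z2add a3 d3))"

lemma xor3_xor3 [simp]: "xor3 (xor3 \<alpha> \<delta>) \<delta> = \<alpha>"
  by (cases \<alpha>; cases \<delta>) (auto simp: xor3_def z2add_def)

lemma xor3_eq_iff [simp]: "xor3 \<alpha> \<delta> = xor3 \<beta> \<delta> \<longleftrightarrow> \<alpha> = \<beta>"
  by (metis xor3_xor3)

lemma sat_local_homog_xor3: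
  "sat_local C \<delta> \<Longrightarrow> sat_local (homog C) (xor3 \<alpha> \<delta>) \<longleftrightarrow> sat_local C \<alpha>"
  by (cases C; cases \<alpha>; cases \<delta>) (auto simp: sat_local_def homog_def xor3_def z2add_def)

text \<open>The shift \<open>\<delta>_C\<close>: the values of \<open>\<tau>\<close> on the variables of \<open>C\<close>, with the first one
  corrected when \<open>\<tau>\<close> violates \<open>C\<close>.\<close>
definition repaired_restriction :: "('v \<Rightarrow> bool) \<Rightarrow> 'v eqn \<Rightarrow> bool \<times> bool \<times> bool" where
  "repaired_restriction \<tau> C =
     (case fst C of (x1,x2,x3) \<Rightarrow> (z2add (\<tau> x1) (\<not> sat \<tau> C), \<tau> x2, \<tau> x3))"

lemma sat_local_repaired_restriction: "sat_local C (repaired_restriction \<tau> C)"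
  by (cases C) (auto simp: repaired_restriction_def sat_def sat_local_def z2add_def)

lemma repaired_restriction_sat:
  "sat \<tau> C \<Longrightarrow> fst C = (x1,x2,x3) \<Longrightarrow> repaired_restriction \<tau> C = (\<tau> x1, \<tau> x2, \<tau> x3)"
  by (simp add: repaired_restriction_def z2add_def)

lemma sat_local_homog_xor3_repaired:
  "sat_local (homog C) (xor3 \<alpha> (repaired_restriction \<tau> C)) \<longleftrightarrow> sat_local C \<alpha>"
  by (rule sat_local_homog_xor3[OF sat_local_repaired_restriction])

lemma sat_local_xor3_repaired:
  "sat_local C (xor3 \<alpha> (repaired_restriction \<tau> C)) \<longleftrightarrow> sat_local (homog C) \<alpha>"
  using sat_local_homog_xor3_repaired
    [where C = C and \<alpha> = "xor3 \<alpha> (repaired_restriction \<tau> C)" and \<tau> = \<tau>]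
  by simp

text \<open>For \<open>i \<ge> length Cs\<close> the constraint \<open>Cs ! i\<close> is unspecified; such vertices lie outside
  both graphs, and \<open>flip\<close> is an involution regardless.\<close>
definition flip :: "('v \<Rightarrow> bool) \<Rightarrow> 'v eqn list \<Rightarrow> 'v vtx \<Rightarrow> 'v vtx" where
  "flip \<tau> Cs v = (case v of
       VarV x a \<Rightarrow> VarV x (z2add a (\<tau> x))
     | ConV i \<alpha> \<Rightarrow> ConV i (xor3 \<alpha> (repaired_restriction \<tau> (Cs ! i))))"

lemma flip_VarV [simp]: "flip \<tau> Cs (VarV x a) = VarV x (z2add a (\<tau> x))"
  by (simp add: flip_def)

lemma flip_ConV [simp]: "flip \<tau> Cs (ConV i \<alpha>) = ConV i (xor3 \<alpha> (repaired_restriction \<tau> (Cs ! i)))"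
  by (simp add: flip_def)

lemma flip_flip [simp]: "flip \<tau> Cs (flip \<tau> Cs v) = v"
  by (cases v) (auto simp: z2add_def)

lemma image_flip_flip [simp]: "flip \<tau> Cs ` flip \<tau> Cs ` e = e"
  by (simp add: image_image)

lemma bij_betw_flip:
  "bij_betw (flip \<tau> Cs) (verts (G_of X Cs)) (verts (G_of X (homog_inst Cs)))"
proof (rule bij_betw_byWitness[where f' = "flip \<tau> Cs"])
  show "flip \<tau> Cs ` verts (G_of X Cs) \<subseteq> verts (G_of X (homog_inst Cs))"
  proof (rule image_subsetI)
    fix v assume "v \<in> verts (G_of X Cs)"
    then show "flip \<tau> Cs v \<in> verts (G_of X (homog_inst Cs))"
      by (cases v) (simp_all add: verts_G_of sat_local_homog_xor3_repaired)
  qed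
  show "flip \<tau> Cs ` verts (G_of X (homog_inst Cs)) \<subseteq> verts (G_of X Cs)"
  proof (rule image_subsetI)
    fix v assume "v \<in> verts (G_of X (homog_inst Cs))"
    then show "flip \<tau> Cs v \<in> verts (G_of X Cs)"
      by (cases v) (auto simp: verts_G_of sat_local_xor3_repaired)
  qed
qed simp_all

lemma image_involution_eq:
  assumes "\<And>x. f (f x) = x" "f ` A \<subseteq> B" "f ` B \<subseteq> A"
  shows "f ` A = B"
proof
  show "f ` A \<subseteq> B" by (fact assms(2))
  have "B = f ` f ` B" using assms(1) by (simp add: image_image)
  also have "\<dots> \<subseteq> f ` A" using assms(3) by (rule image_mono)
  finally show "B \<subseteq> f ` A" .
qed

lemma image_flip_var_edges: "(`) (flip \<tau> Cs) ` var_edges X = var_edges X"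
proof (rule image_involution_eq)
  show "(`) (flip \<tau> Cs) ` var_edges X \<subseteq> var_edges X"
  proof (rule image_subsetI)
    fix e assume "e \<in> var_edges X"
    then obtain x where "x \<in> X" "e = {VarV x False, VarV x True}"
      unfolding var_edges_def by blast
    moreover have "flip \<tau> Cs ` {VarV x False, VarV x True} = {VarV x False, VarV x True}"
      by (cases "\<tau> x") (auto simp: z2add_def)
    ultimately show "flip \<tau> Cs ` e \<in> var_edges X"
      unfolding var_edges_def by auto
  qed
  then show "(`) (flip \<tau> Cs) ` var_edges X \<subseteq> var_edges X" .
qed simp

lemma image_flip_clique_edges:
  "(`) (flip \<tau> Cs) ` clique_edges i (Cs ! i) = clique_edges i (homog (Cs ! i))"
proof (rule image_involution_eq)
  show "(`) (flip \<tau> Cs) ` clique_edges i (Cs ! i) \<subseteq> clique_edges i (homog (Cs ! i))"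
    by (auto elim!: clique_edgesE intro!: clique_edgesI simp: sat_local_homog_xor3_repaired)
  show "(`) (flip \<tau> Cs) ` clique_edges i (homog (Cs ! i)) \<subseteq> clique_edges i (Cs ! i)"
    by (auto elim!: clique_edgesE intro!: clique_edgesI simp: sat_local_xor3_repaired)
qed simp

lemma consistent_homog [simp]: "consistent (homog C) = consistent C"
  by (simp add: consistent_def homog_def fun_eq_iff)

lemma consistent_xor3_repaired:
  assumes "sat \<tau> C"
  shows "consistent C (xor3 \<alpha> (repaired_restriction \<tau> C)) x (z2add a (\<tau> x))
    \<longleftrightarrow> consistent C \<alpha> x a"
proof -
  obtain x1 x2 x3 where vars: "fst C = (x1,x2,x3)" by (metis prod_cases3)
  then have "repaired_restriction \<tau> C = (\<tau> x1, \<tau> x2, \<tau> x3)"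
    using assms(1) by (intro repaired_restriction_sat)
  then show ?thesis
    using vars by (cases \<alpha>) (auto simp: consistent_def xor3_def z2add_def)
qed

lemma image_flip_incidence_edges:
  assumes "sat \<tau> (Cs ! i)"
  shows "(`) (flip \<tau> Cs) ` incidence_edges i (Cs ! i) = incidence_edges i (homog (Cs ! i))"
proof (rule image_involution_eq)
  show "(`) (flip \<tau> Cs) ` incidence_edges i (Cs ! i) \<subseteq> incidence_edges i (homog (Cs ! i))"
    by (auto elim!: incidence_edgesE intro!: incidence_edgesI
        simp: sat_local_homog_xor3_repaired consistent_xor3_repaired[OF assms])
  show "(`) (flip \<tau> Cs) ` incidence_edges i (homog (Cs ! i)) \<subseteq> incidence_edges i (Cs ! i)"
    by (auto elim!: incidence_edgesE intro!: incidence_edgesI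
        simp: sat_local_xor3_repaired consistent_xor3_repaired[OF assms])
qed simp

definition kept_edges :: "'v set \<Rightarrow> 'v eqn list \<Rightarrow> nat set \<Rightarrow> 'v vtx set set" where
  "kept_edges X Cs I = var_edges X \<union> (\<Union>i<length Cs. clique_edges i (Cs ! i))
     \<union> (\<Union>i\<in>I. incidence_edges i (Cs ! i))"

lemma edges_G_of_kept_edges:
  "I \<subseteq> {..<length Cs} \<Longrightarrow>
   edges (G_of X Cs) = kept_edges X Cs I \<union> (\<Union>i\<in>{..<length Cs} - I. incidence_edges i (Cs ! i))"
  unfolding edges_G_of kept_edges_def by blast

lemma finite_kept_edges: "finite X \<Longrightarrow> finite I \<Longrightarrow> finite (kept_edges X Cs I)"
  by (simp add: kept_edges_def finite_var_edges finite_clique_edges finite_incidence_edges)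

lemma image_flip_kept_edges:
  assumes "I \<subseteq> {i. i < length Cs \<and> sat \<tau> (Cs ! i)}"
  shows "(`) (flip \<tau> Cs) ` kept_edges X Cs I = kept_edges X (homog_inst Cs) I"
proof -
  have "(`) (flip \<tau> Cs) ` incidence_edges i (Cs ! i) = incidence_edges i (homog_inst Cs ! i)"
    if "i \<in> I" for i
  proof -
    have "i < length Cs" "sat \<tau> (Cs ! i)" using that assms by auto
    then show ?thesis by (simp add: image_flip_incidence_edges)
  qed
  then have "(`) (flip \<tau> Cs) ` (\<Union>i\<in>I. incidence_edges i (Cs ! i))
      = (\<Union>i\<in>I. incidence_edges i (homog_inst Cs ! i))"
    unfolding image_UN by (rule SUP_cong[OF refl])
  moreover have "(`) (flip \<tau> Cs) ` (\<Union>i<length Cs. clique_edges i (Cs ! i))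
      = (\<Union>i<length Cs. clique_edges i (homog_inst Cs ! i))"
    unfolding image_UN by (rule SUP_cong[OF refl]) (simp add: image_flip_clique_edges)
  ultimately show ?thesis
    unfolding kept_edges_def by (simp add: image_Un image_flip_var_edges)
qed

lemma card_edges_G_of_le:
  assumes "I \<subseteq> {..<length Cs}"
  shows "card (edges (G_of X Cs)) \<le> card (kept_edges X Cs I) + 12 * card ({..<length Cs} - I)"
proof -
  have "card (\<Union>i\<in>{..<length Cs} - I. incidence_edges i (Cs ! i))
      \<le> (\<Sum>i\<in>{..<length Cs} - I. card (incidence_edges i (Cs ! i)))"
    by (rule card_UN_le) simp
  also have "\<dots> \<le> (\<Sum>i\<in>{..<length Cs} - I. 12)"
    by (rule sum_mono) (rule card_incidence_edges_le)
  finally have "card (\<Union>i\<in>{..<length Cs} - I. incidence_edges i (Cs ! i))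
      \<le> 12 * card ({..<length Cs} - I)"
    by simp
  moreover have "card (edges (G_of X Cs))
      \<le> card (kept_edges X Cs I) + card (\<Union>i\<in>{..<length Cs} - I. incidence_edges i (Cs ! i))"
    unfolding edges_G_of_kept_edges[OF assms] by (rule card_Un_le)
  ultimately show ?thesis by linarith
qed

lemma card_kept_edges_ge:
  assumes "is_3xor X Cs" "I \<subseteq> {..<length Cs}"
  shows "6 * length Cs + 12 * card I \<le> card (kept_edges X Cs I)"
proof -
  define A where "A = (\<Union>i<length Cs. clique_edges i (Cs ! i))"
  define B where "B = (\<Union>i\<in>I. incidence_edges i (Cs ! i))"
  have fin: "finite X" "finite I"
    using assms finite_subset by (auto simp: is_3xor_def)
  have "card A = (\<Sum>i<length Cs. card (clique_edges i (Cs ! i)))"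
    unfolding A_def by (rule card_UN_disjoint) (auto simp: finite_clique_edges clique_edges_disjoint)
  then have card_A: "card A = 6 * length Cs"
    by (simp add: card_clique_edges)
  have "card (incidence_edges i (Cs ! i)) = 12" if "i \<in> I" for i
  proof -
    obtain x1 x2 x3 where vars: "fst (Cs ! i) = (x1,x2,x3)" by (metis prod_cases3)
    have "Cs ! i \<in> set Cs" using that assms(2) by auto
    with assms(1) have "distinct [x1,x2,x3]"
      using vars by (rule is_3xor_distinct)
    with vars show ?thesis
      by (rule card_incidence_edges)
  qed
  moreover have "card B = (\<Sum>i\<in>I. card (incidence_edges i (Cs ! i)))"
    unfolding B_def by (rule card_UN_disjoint) (auto simp: fin finite_incidence_edges incidence_edges_disjoint)
  ultimately have card_B: "card B = 12 * card I"
    by simp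
  have "A \<inter> B = {}"
    unfolding A_def B_def using clique_incidence_edges_disjoint by blast
  moreover have "finite A" "finite B"
    unfolding A_def B_def by (simp_all add: fin finite_clique_edges finite_incidence_edges)
  ultimately have card_AB: "card (A \<union> B) = 6 * length Cs + 12 * card I"
    by (simp add: card_Un_disjoint card_A card_B)
  have "A \<union> B \<subseteq> kept_edges X Cs I"
    unfolding kept_edges_def A_def B_def by blast
  then have "card (A \<union> B) \<le> card (kept_edges X Cs I)"
    by (rule card_mono[OF finite_kept_edges[OF fin]])
  with card_AB show ?thesis
    by linarith
qed

lemma card_kept_edges_le_preserved:
  assumes "finite X" "I \<subseteq> {i. i < length Cs \<and> sat \<tau> (Cs ! i)}"
  shows "card (kept_edges X Cs I)
    \<le> card {e \<in> edges (G_of X Cs). flip \<tau> Cs ` e \<in> edges (G_of X (homog_inst Cs))}"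
proof (rule card_mono)
  have "I \<subseteq> {..<length Cs}" using assms(2) by auto
  then have "kept_edges X Cs I \<subseteq> edges (G_of X Cs)"
    and "kept_edges X (homog_inst Cs) I \<subseteq> edges (G_of X (homog_inst Cs))"
    by (simp_all add: edges_G_of_kept_edges)
  then show "kept_edges X Cs I
      \<subseteq> {e \<in> edges (G_of X Cs). flip \<tau> Cs ` e \<in> edges (G_of X (homog_inst Cs))}"
    using image_flip_kept_edges[OF assms(2), of X] by blast
  show "finite {e \<in> edges (G_of X Cs). flip \<tau> Cs ` e \<in> edges (G_of X (homog_inst Cs))}"
    using assms(1) by (simp add: finite_edges_G_of)
qed

lemma card_edges_homog_le:
  assumes "finite X" "I \<subseteq> {i. i < length Cs \<and> sat \<tau> (Cs ! i)}"
  shows "card (edges (G_of X (homog_inst Cs)))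
    \<le> card (kept_edges X Cs I) + 12 * card ({..<length Cs} - I)"
proof -
  have "card (edges (G_of X (homog_inst Cs)))
      \<le> card (kept_edges X (homog_inst Cs) I) + 12 * card ({..<length Cs} - I)"
    using card_edges_G_of_le[of I "homog_inst Cs" X] assms(2) by auto
  moreover have "finite I"
    using assms(2) by (rule finite_subset) simp
  then have "card (kept_edges X (homog_inst Cs) I) \<le> card (kept_edges X Cs I)"
    unfolding image_flip_kept_edges[OF assms(2), symmetric]
    by (intro card_image_le finite_kept_edges assms(1))
  ultimately show ?thesis by linarith
qed

lemma val_attained:
  obtains \<tau> where "frac_sat Cs \<tau> = val Cs"
proof -
  have "card {i. i < length Cs \<and> sat \<tau> (Cs ! i)} \<le> length Cs" for \<tau>
    using card_mono[OF finite_lessThan, of "{i. i < length Cs \<and> sat \<tau> (Cs ! i)}" "length Cs"]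
    by auto
  then have "range (frac_sat Cs) \<subseteq> (\<lambda>k. real k / real (length Cs)) ` {..length Cs}"
    unfolding frac_sat_def by (intro image_subsetI imageI) simp
  then have "finite (range (frac_sat Cs))"
    by (rule finite_subset) simp
  then have "val Cs \<in> range (frac_sat Cs)"
    unfolding val_def by (rule Max_in) simp
  then obtain \<tau> where "val Cs = frac_sat Cs \<tau>"
    by blast
  then show ?thesis
    by (rule that[OF sym])
qed

lemma preserved_fraction_le_GI:
  assumes "finite (edges G)" "bij_betw \<pi> (verts G) (verts H)"
  shows "real (card {e \<in> edges G. \<pi> ` e \<in> edges H}) / real (max (card (edges G)) (card (edges H)))
    \<le> GI G H"
proof -
  let ?ratio = "\<lambda>\<pi>. real (card {e \<in> edges G. \<pi> ` e \<in> edges H}) /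
    real (max (card (edges G)) (card (edges H)))"
  have "?ratio ` {\<pi>. bij_betw \<pi> (verts G) (verts H)}
      \<subseteq> (\<lambda>k. real k / real (max (card (edges G)) (card (edges H)))) ` {..card (edges G)}"
    using assms(1) by (auto intro!: imageI card_mono)
  then have "finite (?ratio ` {\<pi>. bij_betw \<pi> (verts G) (verts H)})"
    by (rule finite_subset) simp
  then show ?thesis
    unfolding GI_def using assms(2) by (intro Max_ge) auto
qed

lemma kept_fraction_bound:
  fixes k p e m s u :: nat and \<epsilon> :: real
  assumes "k \<le> p" "p \<le> e" "e \<le> k + 12 * u" "6 * m + 12 * s \<le> k"
    and "s + u = m" "(1 - \<epsilon>) * m \<le> s" "0 < m"
  shows "1 - 2 * \<epsilon> / 3 \<le> p / e"
proof -
  have total: "18 * m \<le> k + 12 * u" and unsat: "u \<le> \<epsilon> * m"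
    using assms(4-6) by (simp_all add: algebra_simps)
  then have "0 \<le> \<epsilon> * m"
    using of_nat_0_le_iff[of u] by linarith
  then have "0 \<le> \<epsilon>"
    using assms(7) by (simp add: zero_le_mult_iff)
  have "12 * u \<le> 2 * \<epsilon> / 3 * (18 * m)"
    using unsat by simp
  also have "\<dots> \<le> 2 * \<epsilon> / 3 * (k + 12 * u)"
    using total \<open>0 \<le> \<epsilon>\<close> by (intro mult_left_mono) simp_all
  finally have "12 * u / (k + 12 * u) \<le> 2 * \<epsilon> / 3"
    using total assms(7) by (simp add: pos_divide_le_eq)
  then have "1 - 2 * \<epsilon> / 3 \<le> 1 - 12 * u / (k + 12 * u)"
    by simp
  also have "\<dots> = k / (k + 12 * u)"
    using assms(4,7) by (simp add: field_simps)
  also have "\<dots> \<le> k / e"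
    using assms(1-4,7) by (intro divide_left_mono) simp_all
  also have "\<dots> \<le> p / e"
    using assms(1) by (intro divide_right_mono) simp_all
  finally show ?thesis .
qed

lemma GI_homog_ge_frac_sat:
  assumes "is_3xor X Cs" "Cs \<noteq> []"
  shows "1 - 2 * (1 - frac_sat Cs \<tau>) / 3 \<le> GI (G_of X Cs) (G_of X (homog_inst Cs))"
proof -
  define S where "S = {i. i < length Cs \<and> sat \<tau> (Cs ! i)}"
  define U where "U = {..<length Cs} - S"
  define K where "K = kept_edges X Cs S"
  define P where "P = {e \<in> edges (G_of X Cs). flip \<tau> Cs ` e \<in> edges (G_of X (homog_inst Cs))}"
  have fin: "finite X" using assms(1) by (simp add: is_3xor_def)
  have S: "S \<subseteq> {i. i < length Cs \<and> sat \<tau> (Cs ! i)}" "S \<subseteq> {..<length Cs}"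
    by (auto simp: S_def)
  have "(1 - (1 - frac_sat Cs \<tau>)) * length Cs \<le> card S"
    using assms(2) by (simp add: frac_sat_def S_def)
  moreover have "card S + card U = length Cs"
    using card_mono[OF finite_lessThan S(2)] S(2) by (simp add: U_def card_Diff_subset finite_subset)
  moreover have "card K \<le> card P"
    unfolding K_def P_def using fin S(1) by (rule card_kept_edges_le_preserved)
  moreover have "6 * length Cs + 12 * card S \<le> card K"
    unfolding K_def using assms(1) S(2) by (rule card_kept_edges_ge)
  moreover have "card (edges (G_of X Cs)) \<le> card K + 12 * card U"
    unfolding K_def U_def using S(2) by (rule card_edges_G_of_le)
  moreover have "card (edges (G_of X (homog_inst Cs))) \<le> card K + 12 * card U"
    unfolding K_def U_def using fin S(1) by (rule card_edges_homog_le)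
  moreover have "card P \<le> card (edges (G_of X Cs))"
    unfolding P_def using fin by (intro card_mono finite_edges_G_of) auto
  ultimately have "1 - 2 * (1 - frac_sat Cs \<tau>) / 3 \<le>
      card P / max (card (edges (G_of X Cs))) (card (edges (G_of X (homog_inst Cs))))"
    using assms(2) by (intro kept_fraction_bound[where k = "card K" and s = "card S"
        and u = "card U" and m = "length Cs"]) (simp_all add: le_max_iff_disj)
  also have "\<dots> \<le> GI (G_of X Cs) (G_of X (homog_inst Cs))"
    unfolding P_def of_nat_max[symmetric] using finite_edges_G_of[OF fin] bij_betw_flip
    by (rule preserved_fraction_le_GI)
  finally show ?thesis .
qed

theorem lemma4p1:
  fixes X :: "'v set" and Cs :: "'v eqn list" and \<epsilon> :: real
  assumes "is_3xor X Cs"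
    and "Cs \<noteq> []"
    and "val Cs \<ge> 1 - \<epsilon>"
  shows "GI (G_of X Cs) (G_of X (homog_inst Cs)) \<ge> 1 - 2 * \<epsilon> / 3"
proof -
  obtain \<tau> where "frac_sat Cs \<tau> = val Cs"
    by (rule val_attained)
  with GI_homog_ge_frac_sat[OF assms(1,2)]
  have "1 - 2 * (1 - val Cs) / 3 \<le> GI (G_of X Cs) (G_of X (homog_inst Cs))"
    by metis
  moreover have "1 - 2 * \<epsilon> / 3 \<le> 1 - 2 * (1 - val Cs) / 3"
    using assms(3) by simp
  ultimately show ?thesis
    by linarith
qed

end
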